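(* Let $m\geq 2$ and $n\geq 3$ be integers. The Drazin index of the adjacency matrix of the oriented Dutch windmill graph $D^m_n$ is $n-1$.
   Context: For integers $m\geq 1$, $n\geq 3$, the oriented Dutch windmill graph $D^m_n$ is the directed graph with vertex set $V=\{1,2,\ldots,m(n-1)+1\}$ whose directed edges $(a,b)$ are exactly: $(1,(k-1)(n-1)+2)$ for $k\in\{1,\ldots,m\}$; $((k-1)(n-1)+i,(k-1)(n-1)+i+1)$ for $k\in\{1,\ldots,m\}$ and $i\in\{2,\ldots,n-1\}$; and $((k-1)(n-1)+n,1)$ for $k\in\{1,\ldots,m\}$. Its adjacency matrix $M=(a_{ij})$ has $a_{ij}=1$ if $(i,j)$ is an edge and $0$ otherwise. The Drazin index $\operatorname{ind}(A)$ of a square matrix $A$ is the least nonnegative integer $k$ such that there is a matrix $X$ with $A^{k+1}X=A^k$, $XAX=X$, $AX=XA$; equivalently, the multiplicity of $0$ as a root of the minimal polynomial of $A$. *)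

theory Defs
  imports "Jordan_Normal_Form.Matrix"
begin

definition windmill_nv :: "nat \<Rightarrow> nat \<Rightarrow> nat" where
  "windmill_nv m n = m * (n - 1) + 1"

definition windmill_edge :: "nat \<Rightarrow> nat \<Rightarrow> nat \<Rightarrow> nat \<Rightarrow> bool" where
  "windmill_edge m n a b \<longleftrightarrow>
     (\<exists>k\<in>{1..m}. (a = 1 \<and> b = (k - 1) * (n - 1) + 2)
        \<or> (\<exists>i\<in>{2..n-1}. a = (k - 1) * (n - 1) + i \<and> b = (k - 1) * (n - 1) + i + 1)
        \<or> (a = (k - 1) * (n - 1) + n \<and> b = 1))"

text \<open>Adjacency matrix; row/column index i (0-based) corresponds to vertex i+1.\<close>
definition windmill_adj :: "nat \<Rightarrow> nat \<Rightarrow> real mat" where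
  "windmill_adj m n = mat (windmill_nv m n) (windmill_nv m n)
     (\<lambda>(i, j). if windmill_edge m n (i + 1) (j + 1) then 1 else 0)"

definition drazin_index :: "'a::comm_ring_1 mat \<Rightarrow> nat" where
  "drazin_index A = (LEAST k. \<exists>X \<in> carrier_mat (dim_row A) (dim_row A).
      A ^\<^sub>m (k + 1) * X = A ^\<^sub>m k \<and> X * A * X = X \<and> A * X = X * A)"

end

theory Submission
  imports Defs
begin

text \<open>Every vertex other than the hub has exactly one out-neighbour, so a walk starting at the
  p-th vertex of a cycle runs along that cycle and reaches the hub after n - 1 - p steps, while the
  hub fans out into the m cycles and is reached again after n steps along each of them. Hence
  A^(2n-1) = m A^(n-1), and (1/m) A^(n-1) is a Drazin inverse of index n - 1. Conversely, for
  k < n - 1 the vertices at distance k + 1 from the hub on two different cycles have equal rows in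
  A^(k+1) but different rows in A^k, which is impossible if A^(k+1) X = A^k.\<close>

definition is_drazin_inverse :: "'a::comm_ring_1 mat \<Rightarrow> nat \<Rightarrow> 'a mat \<Rightarrow> bool" where
  "is_drazin_inverse A k X \<longleftrightarrow> X \<in> carrier_mat (dim_row A) (dim_row A) \<and>
     A ^\<^sub>m (k + 1) * X = A ^\<^sub>m k \<and> X * A * X = X \<and> A * X = X * A"

lemma drazin_index_eqI:
  assumes "is_drazin_inverse A k X" and "\<And>j Y. is_drazin_inverse A j Y \<Longrightarrow> k \<le> j"
  shows "drazin_index A = k"
  unfolding drazin_index_def
  by (rule Least_equality) (use assms in \<open>auto simp: is_drazin_inverse_def\<close>)

lemma pow_mat_add:
  assumes "A \<in> carrier_mat N N"
  shows "A ^\<^sub>m (i + j) = A ^\<^sub>m i * A ^\<^sub>m j"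
proof (induction j)
  case (Suc j)
  have "A ^\<^sub>m (i + Suc j) = (A ^\<^sub>m i * A ^\<^sub>m j) * A" using Suc by simp
  also have "\<dots> = A ^\<^sub>m i * (A ^\<^sub>m j * A)" using assms by (intro assoc_mult_mat) auto
  finally show ?case by simp
qed (use assms in simp)

lemma pow_mat_Suc_left:
  assumes "A \<in> carrier_mat N N"
  shows "A ^\<^sub>m Suc j = A * A ^\<^sub>m j"
  using pow_mat_add[OF assms, of 1 j] assms by simp

lemma is_drazin_inverse_of_pow_eq:
  fixes A :: "'a::field mat"
  assumes A: "A \<in> carrier_mat N N" and c: "c \<noteq> 0"
    and pow_eq: "A ^\<^sub>m (2 * k + 1) = c \<cdot>\<^sub>m A ^\<^sub>m k"
  shows "is_drazin_inverse A k (inverse c \<cdot>\<^sub>m A ^\<^sub>m k)"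
proof -
  let ?X = "inverse c \<cdot>\<^sub>m A ^\<^sub>m k"
  have Ak: "A ^\<^sub>m k \<in> carrier_mat N N" and Ak1: "A ^\<^sub>m (k + 1) \<in> carrier_mat N N"
    by (rule pow_carrier_mat[OF A])+
  have split: "A ^\<^sub>m (k + 1) * A ^\<^sub>m k = A ^\<^sub>m (2 * k + 1)"
    unfolding pow_mat_add[OF A, symmetric] by (simp only: mult_2 add_ac)
  have comm: "A * A ^\<^sub>m k = A ^\<^sub>m k * A"
    using pow_mat_Suc_left[OF A, of k] by simp
  have drazin_eq: "A ^\<^sub>m (k + 1) * ?X = A ^\<^sub>m k"
  proof -
    have "A ^\<^sub>m (k + 1) * ?X = inverse c \<cdot>\<^sub>m (A ^\<^sub>m (k + 1) * A ^\<^sub>m k)"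
      by (rule mult_smult_distrib[OF Ak1 Ak])
    also have "\<dots> = (inverse c * c) \<cdot>\<^sub>m A ^\<^sub>m k"
      unfolding split pow_eq by (intro eq_matI) auto
    also have "\<dots> = A ^\<^sub>m k"
      using c by (intro eq_matI) auto
    finally show ?thesis .
  qed
  moreover have "?X * A * ?X = ?X"
  proof -
    have XA: "?X * A = inverse c \<cdot>\<^sub>m A ^\<^sub>m (k + 1)"
      using mult_smult_assoc_mat[OF Ak A] by simp
    have "?X * A * ?X = inverse c \<cdot>\<^sub>m (A ^\<^sub>m (k + 1) * ?X)"
      unfolding XA by (rule mult_smult_assoc_mat[OF Ak1 smult_carrier_mat[OF Ak]])
    then show ?thesis unfolding drazin_eq .
  qed
  moreover have "A * ?X = ?X * A"
    using mult_smult_distrib[OF A Ak] mult_smult_assoc_mat[OF Ak A] comm by simp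
  ultimately show ?thesis using A by (simp add: is_drazin_inverse_def)
qed

lemma is_drazin_inverse_row_eq:
  assumes X: "is_drazin_inverse A k X" and A: "A \<in> carrier_mat N N" and "i < N" "j < N"
    and rows: "row (A ^\<^sub>m (k + 1)) i = row (A ^\<^sub>m (k + 1)) j"
  shows "row (A ^\<^sub>m k) i = row (A ^\<^sub>m k) j"
proof -
  have drazin_eq: "A ^\<^sub>m (k + 1) * X = A ^\<^sub>m k" and X_carrier: "X \<in> carrier_mat N N"
    using X A by (auto simp: is_drazin_inverse_def)
  have "row (A ^\<^sub>m k) i = row (A ^\<^sub>m (k + 1) * X) i" unfolding drazin_eq ..
  also have "\<dots> = row (A ^\<^sub>m (k + 1) * X) j"
    using \<open>i < N\<close> \<open>j < N\<close> rows
    by (simp only: row_mult[OF pow_carrier_mat[OF A] X_carrier])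
  also have "\<dots> = row (A ^\<^sub>m k) j" unfolding drazin_eq ..
  finally show ?thesis .
qed

text \<open>Matrix index of vertex c(n-1) + p + 2 of the graph, the vertex reached from the hub in
  p + 1 steps along the cycle c (both counted from 0, p < n - 1). The hub, vertex 1, has index 0.\<close>
definition windmill_vertex :: "nat \<Rightarrow> nat \<Rightarrow> nat \<Rightarrow> nat" where
  "windmill_vertex n c p = 1 + c * (n - 1) + p"

lemma windmill_vertex_eq_iff:
  assumes "p < n - 1" and "q < n - 1"
  shows "windmill_vertex n c p = windmill_vertex n d q \<longleftrightarrow> c = d \<and> p = q"
proof
  assume "windmill_vertex n c p = windmill_vertex n d q"
  then have eq: "p + (n - 1) * c = q + (n - 1) * d"
    by (simp add: windmill_vertex_def ac_simps)
  then have "(p + (n - 1) * c) div (n - 1) = (q + (n - 1) * d) div (n - 1)"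
    and "(p + (n - 1) * c) mod (n - 1) = (q + (n - 1) * d) mod (n - 1)"
    by simp_all
  then show "c = d \<and> p = q" using assms by simp
qed simp

lemma windmill_vertex_less:
  assumes "c < m" and "p < n - 1"
  shows "windmill_vertex n c p < windmill_nv m n"
proof -
  have "(c + 1) * (n - 1) \<le> m * (n - 1)" using assms(1) by (intro mult_le_mono1) simp
  then show ?thesis using assms(2) by (simp add: windmill_vertex_def windmill_nv_def)
qed

lemma windmill_vertex_cases:
  assumes "i < windmill_nv m n" and "i \<noteq> 0"
  obtains c p where "c < m" "p < n - 1" "i = windmill_vertex n c p"
proof
  have "i - 1 < m * (n - 1)" using assms by (simp add: windmill_nv_def)
  then show "(i - 1) div (n - 1) < m" by (rule less_mult_imp_div_less)
  from \<open>i - 1 < m * (n - 1)\<close> have "n - 1 \<noteq> 0" by auto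
  then show "(i - 1) mod (n - 1) < n - 1" by simp
  show "i = windmill_vertex n ((i - 1) div (n - 1)) ((i - 1) mod (n - 1))"
    using assms(2) by (simp add: windmill_vertex_def div_mult_mod_eq)
qed

lemma windmill_edge_from_hub:
  assumes "n \<ge> 3"
  shows "windmill_edge m n 1 (w + 1) \<longleftrightarrow> (\<exists>c<m. w = windmill_vertex n c 0)"
proof
  assume "windmill_edge m n 1 (w + 1)"
  then obtain k where "k \<in> {1..m}" "w + 1 = (k - 1) * (n - 1) + 2"
    using assms unfolding windmill_edge_def by auto
  then show "\<exists>c<m. w = windmill_vertex n c 0"
    by (intro exI[of _ "k - 1"]) (auto simp: windmill_vertex_def)
next
  assume "\<exists>c<m. w = windmill_vertex n c 0"
  then obtain c where "c < m" "w = windmill_vertex n c 0" by blast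
  then show "windmill_edge m n 1 (w + 1)"
    unfolding windmill_edge_def windmill_vertex_def by (intro bexI[of _ "c + 1"]) auto
qed

lemma windmill_edge_from_cycle:
  assumes n: "n \<ge> 3" and c: "c < m" and p: "p < n - 1"
  shows "windmill_edge m n (windmill_vertex n c p + 1) (w + 1) \<longleftrightarrow>
    w = (if p < n - 2 then windmill_vertex n c (p + 1) else 0)"
proof
  assume "windmill_edge m n (windmill_vertex n c p + 1) (w + 1)"
  then obtain k where k: "k \<in> {1..m}" and
    steps: "(\<exists>i\<in>{2..n-1}. windmill_vertex n c p + 1 = (k - 1) * (n - 1) + i
              \<and> w + 1 = (k - 1) * (n - 1) + i + 1)
      \<or> (windmill_vertex n c p + 1 = (k - 1) * (n - 1) + n \<and> w + 1 = 1)"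
    unfolding windmill_edge_def by (auto simp: windmill_vertex_def)
  then show "w = (if p < n - 2 then windmill_vertex n c (p + 1) else 0)"
  proof (elim disjE bexE conjE)
    fix i assume i: "i \<in> {2..n-1}"
      and v: "windmill_vertex n c p + 1 = (k - 1) * (n - 1) + i"
      and w: "w + 1 = (k - 1) * (n - 1) + i + 1"
    have "windmill_vertex n c p = windmill_vertex n (k - 1) (i - 2)"
      using i v by (simp add: windmill_vertex_def)
    then have "p = i - 2" using p i windmill_vertex_eq_iff[of p n "i - 2"] by auto
    moreover have "i - 2 < n - 2" using i by auto
    moreover have "w = windmill_vertex n c p + 1" using v w by simp
    ultimately show ?thesis by (simp add: windmill_vertex_def)
  next
    assume v: "windmill_vertex n c p + 1 = (k - 1) * (n - 1) + n" and "w + 1 = 1"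
    have "windmill_vertex n c p = windmill_vertex n (k - 1) (n - 2)"
      using v n by (simp add: windmill_vertex_def)
    then have "p = n - 2" using p n windmill_vertex_eq_iff[of p n "n - 2"] by auto
    then show ?thesis using \<open>w + 1 = 1\<close> by simp
  qed
next
  assume w: "w = (if p < n - 2 then windmill_vertex n c (p + 1) else 0)"
  show "windmill_edge m n (windmill_vertex n c p + 1) (w + 1)"
  proof (cases "p < n - 2")
    case True
    then show ?thesis using w c unfolding windmill_edge_def windmill_vertex_def
      by (intro bexI[of _ "c + 1"] disjI2 disjI1 bexI[of _ "p + 2"]) auto
  next
    case False
    then have "p = n - 2" using p by simp
    then show ?thesis using w n c unfolding windmill_edge_def windmill_vertex_def
      by (intro bexI[of _ "c + 1"] disjI2) auto
  qed
qed

lemma windmill_adj_carrier: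
  "windmill_adj m n \<in> carrier_mat (windmill_nv m n) (windmill_nv m n)"
  unfolding windmill_adj_def by simp

lemma windmill_adj_dim [simp]:
  "dim_row (windmill_adj m n) = windmill_nv m n" "dim_col (windmill_adj m n) = windmill_nv m n"
  unfolding windmill_adj_def by simp_all

lemma windmill_adj_index:
  "i < windmill_nv m n \<Longrightarrow> j < windmill_nv m n \<Longrightarrow>
    windmill_adj m n $$ (i, j) = (if windmill_edge m n (i + 1) (j + 1) then 1 else 0)"
  unfolding windmill_adj_def by simp

lemma windmill_adj_mult_cycle:
  assumes n: "n \<ge> 3" and c: "c < m" and p: "p < n - 1"
    and R: "R \<in> carrier_mat (windmill_nv m n) N" and l: "l < N"
  shows "(windmill_adj m n * R) $$ (windmill_vertex n c p, l) =
    R $$ (if p < n - 2 then windmill_vertex n c (p + 1) else 0, l)"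
proof -
  let ?N = "windmill_nv m n" and ?v = "windmill_vertex n c p"
  let ?s = "if p < n - 2 then windmill_vertex n c (p + 1) else 0"
  have v: "?v < ?N" by (rule windmill_vertex_less[OF c p])
  have s: "?s < ?N"
    using windmill_vertex_less[OF c, of "p + 1" n] by (auto simp: windmill_nv_def)
  have "(windmill_adj m n * R) $$ (?v, l) =
      (\<Sum>k<?N. windmill_adj m n $$ (?v, k) * R $$ (k, l))"
    using v l R by (auto simp: scalar_prod_def lessThan_atLeast0 intro: sum.cong)
  also have "\<dots> = (\<Sum>k<?N. if k = ?s then R $$ (k, l) else 0)"
    using v windmill_edge_from_cycle[OF n c p]
    by (intro sum.cong) (auto simp: windmill_adj_index)
  also have "\<dots> = R $$ (?s, l)" using s by simp
  finally show ?thesis .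
qed

lemma windmill_adj_mult_hub:
  assumes n: "n \<ge> 3" and R: "R \<in> carrier_mat (windmill_nv m n) N" and l: "l < N"
  shows "(windmill_adj m n * R) $$ (0, l) = (\<Sum>c<m. R $$ (windmill_vertex n c 0, l))"
proof -
  let ?N = "windmill_nv m n" and ?F = "(\<lambda>c. windmill_vertex n c 0) ` {..<m}"
  have "0 < ?N" by (simp add: windmill_nv_def)
  have F: "?F \<subseteq> {..<?N}" using windmill_vertex_less[of _ m 0 n] n by auto
  have inj: "inj_on (\<lambda>c. windmill_vertex n c 0) {..<m}"
    using n windmill_vertex_eq_iff[of 0 n 0] by (auto simp: inj_on_def)
  have "(windmill_adj m n * R) $$ (0, l) =
      (\<Sum>k<?N. windmill_adj m n $$ (0, k) * R $$ (k, l))"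
    using \<open>0 < ?N\<close> l R by (auto simp: scalar_prod_def lessThan_atLeast0 intro: sum.cong)
  also have "\<dots> = (\<Sum>k<?N. if k \<in> ?F then R $$ (k, l) else 0)"
    using \<open>0 < ?N\<close> windmill_edge_from_hub[OF n]
    by (intro sum.cong) (auto simp: windmill_adj_index)
  also have "\<dots> = (\<Sum>k\<in>?F. R $$ (k, l))"
    using F by (simp add: sum.If_cases Int_absorb1)
  also have "\<dots> = (\<Sum>c<m. R $$ (windmill_vertex n c 0, l))"
    using inj by (simp add: sum.reindex)
  finally show ?thesis .
qed

lemma windmill_adj_pow_mult_cycle:
  assumes n: "n \<ge> 3" and c: "c < m" and t: "p + t \<le> n - 2"
    and R: "R \<in> carrier_mat (windmill_nv m n) N" and l: "l < N"
  shows "(windmill_adj m n ^\<^sub>m t * R) $$ (windmill_vertex n c p, l) =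
    R $$ (windmill_vertex n c (p + t), l)"
  using t R
proof (induction t arbitrary: R)
  case 0
  then show ?case using windmill_vertex_less[OF c, of p n] n by simp
next
  case (Suc t)
  let ?A = "windmill_adj m n"
  have A: "?A \<in> carrier_mat (windmill_nv m n) (windmill_nv m n)" by (rule windmill_adj_carrier)
  have "?A ^\<^sub>m Suc t * R = ?A ^\<^sub>m t * (?A * R)"
    using assoc_mult_mat[OF pow_carrier_mat[OF A] A Suc.prems(2)] by simp
  then have "(?A ^\<^sub>m Suc t * R) $$ (windmill_vertex n c p, l) =
      (?A * R) $$ (windmill_vertex n c (p + t), l)"
    using Suc.IH[of "?A * R"] Suc.prems A by simp
  also have "\<dots> = R $$ (windmill_vertex n c (p + Suc t), l)"
    using windmill_adj_mult_cycle[OF n c, of "p + t"] Suc.prems l by simp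
  finally show ?case .
qed

lemma windmill_adj_pow_mult_to_hub:
  assumes n: "n \<ge> 3" and c: "c < m" and p: "p < n - 1"
    and R: "R \<in> carrier_mat (windmill_nv m n) N" and l: "l < N"
  shows "(windmill_adj m n ^\<^sub>m (n - 1 - p) * R) $$ (windmill_vertex n c p, l) = R $$ (0, l)"
proof -
  let ?A = "windmill_adj m n"
  have A: "?A \<in> carrier_mat (windmill_nv m n) (windmill_nv m n)" by (rule windmill_adj_carrier)
  have "n - 1 - p = Suc (n - 2 - p)" using p by simp
  then have "?A ^\<^sub>m (n - 1 - p) * R = ?A ^\<^sub>m (n - 2 - p) * (?A * R)"
    using assoc_mult_mat[OF pow_carrier_mat[OF A] A R] by simp
  then have "(?A ^\<^sub>m (n - 1 - p) * R) $$ (windmill_vertex n c p, l) =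
      (?A * R) $$ (windmill_vertex n c (n - 2), l)"
    using windmill_adj_pow_mult_cycle[OF n c _ mult_carrier_mat[OF A R] l, of p "n - 2 - p"] p
    by simp
  also have "\<dots> = R $$ (0, l)"
    using windmill_adj_mult_cycle[OF n c, of "n - 2"] n R l by simp
  finally show ?thesis .
qed

lemma windmill_adj_pow_mult_hub:
  assumes n: "n \<ge> 3" and R: "R \<in> carrier_mat (windmill_nv m n) N" and l: "l < N"
  shows "(windmill_adj m n ^\<^sub>m n * R) $$ (0, l) = real m * R $$ (0, l)"
proof -
  let ?A = "windmill_adj m n"
  have A: "?A \<in> carrier_mat (windmill_nv m n) (windmill_nv m n)" by (rule windmill_adj_carrier)
  have "?A ^\<^sub>m n * R = ?A * ?A ^\<^sub>m (n - 1) * R"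
    using pow_mat_Suc_left[OF A, of "n - 1"] n by simp
  also have "\<dots> = ?A * (?A ^\<^sub>m (n - 1) * R)"
    by (rule assoc_mult_mat[OF A pow_carrier_mat[OF A] R])
  finally have "(?A ^\<^sub>m n * R) $$ (0, l) =
      (\<Sum>c<m. (?A ^\<^sub>m (n - 1) * R) $$ (windmill_vertex n c 0, l))"
    using windmill_adj_mult_hub[OF n mult_carrier_mat[OF pow_carrier_mat[OF A] R] l] by simp
  also have "\<dots> = (\<Sum>c<m. R $$ (0, l))"
    using windmill_adj_pow_mult_to_hub[OF n _ _ R l, of _ 0] n by simp
  finally show ?thesis by simp
qed

lemma windmill_adj_pow_eq:
  assumes n: "n \<ge> 3"
  shows "windmill_adj m n ^\<^sub>m (2 * (n - 1) + 1) = real m \<cdot>\<^sub>m windmill_adj m n ^\<^sub>m (n - 1)"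
proof (rule eq_matI)
  let ?A = "windmill_adj m n" and ?N = "windmill_nv m n"
  have A: "?A \<in> carrier_mat ?N ?N" by (rule windmill_adj_carrier)
  fix i l
  assume "i < dim_row (real m \<cdot>\<^sub>m ?A ^\<^sub>m (n - 1))"
    and "l < dim_col (real m \<cdot>\<^sub>m ?A ^\<^sub>m (n - 1))"
  then have i: "i < ?N" and l: "l < ?N" using n by simp_all
  show "(?A ^\<^sub>m (2 * (n - 1) + 1)) $$ (i, l) = (real m \<cdot>\<^sub>m ?A ^\<^sub>m (n - 1)) $$ (i, l)"
  proof (cases "i = 0")
    case True
    have "2 * (n - 1) + 1 = n + (n - 1)" using n by simp
    then have "?A ^\<^sub>m (2 * (n - 1) + 1) = ?A ^\<^sub>m n * ?A ^\<^sub>m (n - 1)"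
      by (simp only: pow_mat_add[OF A])
    then show ?thesis
      using True windmill_adj_pow_mult_hub[OF n pow_carrier_mat[OF A] l] i l A by simp
  next
    case False
    then obtain c p where c: "c < m" and p: "p < n - 1" and i_def: "i = windmill_vertex n c p"
      using windmill_vertex_cases[OF i] by blast
    have "2 * (n - 1) + 1 = (n - 1 - p) + (n + p)" using p by simp
    then have split_lhs:
        "?A ^\<^sub>m (2 * (n - 1) + 1) = ?A ^\<^sub>m (n - 1 - p) * (?A ^\<^sub>m n * ?A ^\<^sub>m p)"
      by (simp only: pow_mat_add[OF A])
    have split_rhs: "?A ^\<^sub>m (n - 1) = ?A ^\<^sub>m (n - 1 - p) * ?A ^\<^sub>m p"
      unfolding pow_mat_add[OF A, symmetric] using p by simp
    have An: "?A ^\<^sub>m n * ?A ^\<^sub>m p \<in> carrier_mat ?N ?N"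
      by (rule mult_carrier_mat[OF pow_carrier_mat[OF A] pow_carrier_mat[OF A]])
    have "(?A ^\<^sub>m (2 * (n - 1) + 1)) $$ (i, l) = (?A ^\<^sub>m n * ?A ^\<^sub>m p) $$ (0, l)"
      unfolding split_lhs i_def by (rule windmill_adj_pow_mult_to_hub[OF n c p An l])
    also have "\<dots> = real m * (?A ^\<^sub>m p) $$ (0, l)"
      by (rule windmill_adj_pow_mult_hub[OF n pow_carrier_mat[OF A] l])
    also have "(?A ^\<^sub>m p) $$ (0, l) = (?A ^\<^sub>m (n - 1)) $$ (i, l)"
      unfolding split_rhs i_def
      by (rule windmill_adj_pow_mult_to_hub[OF n c p pow_carrier_mat[OF A] l, symmetric])
    finally show ?thesis using i l A by simp
  qed
qed (simp_all add: windmill_adj_carrier)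

lemma windmill_adj_pow_cycle_entry:
  assumes n: "n \<ge> 3" and c: "c < m" and t: "p + t \<le> n - 2" and l: "l < windmill_nv m n"
  shows "(windmill_adj m n ^\<^sub>m t) $$ (windmill_vertex n c p, l) =
    (if l = windmill_vertex n c (p + t) then 1 else 0)"
proof -
  let ?N = "windmill_nv m n"
  have "(windmill_adj m n ^\<^sub>m t) $$ (windmill_vertex n c p, l) =
      (windmill_adj m n ^\<^sub>m t * 1\<^sub>m ?N) $$ (windmill_vertex n c p, l)"
    using windmill_adj_carrier by simp
  also have "\<dots> = 1\<^sub>m ?N $$ (windmill_vertex n c (p + t), l)"
    by (rule windmill_adj_pow_mult_cycle[OF n c t one_carrier_mat l])
  also have "\<dots> = (if l = windmill_vertex n c (p + t) then 1 else 0)"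
    using windmill_vertex_less[OF c, of "p + t" n] t n l by auto
  finally show ?thesis .
qed

lemma windmill_adj_pow_to_hub_entry:
  assumes n: "n \<ge> 3" and c: "c < m" and p: "p < n - 1" and l: "l < windmill_nv m n"
  shows "(windmill_adj m n ^\<^sub>m (n - 1 - p)) $$ (windmill_vertex n c p, l) =
    (if l = 0 then 1 else 0)"
proof -
  let ?N = "windmill_nv m n"
  have "(windmill_adj m n ^\<^sub>m (n - 1 - p)) $$ (windmill_vertex n c p, l) =
      (windmill_adj m n ^\<^sub>m (n - 1 - p) * 1\<^sub>m ?N) $$ (windmill_vertex n c p, l)"
    using windmill_adj_carrier by simp
  also have "\<dots> = 1\<^sub>m ?N $$ (0, l)"
    by (rule windmill_adj_pow_mult_to_hub[OF n c p one_carrier_mat l])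
  also have "\<dots> = (if l = 0 then 1 else 0)"
    using l by auto
  finally show ?thesis .
qed

lemma windmill_adj_not_drazin_inverse:
  assumes m: "m \<ge> 2" and n: "n \<ge> 3" and k: "k < n - 1"
  shows "\<not> is_drazin_inverse (windmill_adj m n) k X"
proof
  assume X: "is_drazin_inverse (windmill_adj m n) k X"
  let ?A = "windmill_adj m n" and ?N = "windmill_nv m n"
  define p where "p = n - 2 - k"
  have p: "p < n - 1" "n - 1 - p = k + 1" "p + k = n - 2" using k n by (auto simp: p_def)
  let ?a = "windmill_vertex n 0 p" and ?b = "windmill_vertex n 1 p"
    and ?l = "windmill_vertex n 0 (n - 2)"
  have a: "?a < ?N" and b: "?b < ?N" and l: "?l < ?N"
    using windmill_vertex_less[of _ m _ n] p(1) m n by auto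
  have "row (?A ^\<^sub>m (k + 1)) ?a = row (?A ^\<^sub>m (k + 1)) ?b"
  proof (rule eq_vecI)
    fix j assume "j < dim_vec (row (?A ^\<^sub>m (k + 1)) ?b)"
    then have j: "j < ?N" by simp
    show "row (?A ^\<^sub>m (k + 1)) ?a $ j = row (?A ^\<^sub>m (k + 1)) ?b $ j"
      using windmill_adj_pow_to_hub_entry[OF n _ p(1) j] a b j m unfolding p(2)
      by (simp del: pow_mat.simps)
  qed simp
  then have "row (?A ^\<^sub>m k) ?a = row (?A ^\<^sub>m k) ?b"
    by (rule is_drazin_inverse_row_eq[OF X windmill_adj_carrier a b])
  then have "row (?A ^\<^sub>m k) ?a $ ?l = row (?A ^\<^sub>m k) ?b $ ?l" by simp
  then have "(?A ^\<^sub>m k) $$ (?a, ?l) = (?A ^\<^sub>m k) $$ (?b, ?l)"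
    using a b l windmill_adj_carrier by (simp del: pow_mat.simps)
  moreover have "(?A ^\<^sub>m k) $$ (?a, ?l) = 1"
    using windmill_adj_pow_cycle_entry[OF n _ _ l, of 0 p k] p(3) m by simp
  moreover have "?l \<noteq> windmill_vertex n 1 (n - 2)"
    using windmill_vertex_eq_iff[of "n - 2" n "n - 2"] n by simp
  then have "(?A ^\<^sub>m k) $$ (?b, ?l) = 0"
    using windmill_adj_pow_cycle_entry[OF n _ _ l, of 1 p k] p(3) m by simp
  ultimately show False by simp
qed

theorem theorem3p2:
  fixes m n :: nat
  assumes "m \<ge> 2" and "n \<ge> 3"
  shows "drazin_index (windmill_adj m n) = n - 1"
proof (rule drazin_index_eqI)
  show "is_drazin_inverse (windmill_adj m n) (n - 1)
      (inverse (real m) \<cdot>\<^sub>m windmill_adj m n ^\<^sub>m (n - 1))"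
    using assms(1) windmill_adj_pow_eq[OF assms(2)]
    by (intro is_drazin_inverse_of_pow_eq[OF windmill_adj_carrier]) simp_all
  show "n - 1 \<le> j" if "is_drazin_inverse (windmill_adj m n) j Y" for j Y
    using windmill_adj_not_drazin_inverse[OF assms] that by (meson not_less)
qed

end
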